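(* Let $d\in\mathbb{N}$ and $m_1,\dots,m_{2d}\in\mathbb{Z}$ with $m_i>0$ for all $i\neq 2d$ and $m_{2d}\geq 0$. Then $\mathsf{C}\mathsf{W}(m_1,\dots,m_{2d})\mathsf{E}$ has five distinct real eigenvalues whose absolute values are also pairwise distinct, and the eigenvalue of largest absolute value is $$s+\tfrac12\sqrt{5s^2+4ts+4}+\tfrac12\sqrt{9s^2+4ts+4s\sqrt{5s^2+4ts+4}},$$ where $t=\operatorname{tr}(W_1(m_1,\dots,m_{2d}))$ and $s=\operatorname{tr}^*(W_1(m_1,\dots,m_{2d}))$.
   Context: $A_1=\begin{pmatrix}1&1\\0&1\end{pmatrix}$, $B_1=\begin{pmatrix}1&0\\1&1\end{pmatrix}$, $W_1(m_1,\dots,m_{2d})=\prod_{i=1}^dA_1^{m_{2i-1}}B_1^{m_{2i}}$. Let $\mathsf{A}=\begin{pmatrix}1&1&0&0&2\\0&1&0&0&0\\0&0&1&1&0\\0&0&0&1&0\\0&0&0&0&1\end{pmatrix}$, $\mathsf{B}=\begin{pmatrix}1&0&0&0&0\\1&1&0&0&0\\0&0&1&0&0\\0&0&1&1&2\\0&0&0&0&1\end{pmatrix}$, $\mathsf{C}=\begin{pmatrix}1&0&0&0&0\\0&1&0&0&0\\0&0&1&0&0\\0&0&0&1&0\\2&0&0&2&1\end{pmatrix}$, $\mathsf{E}=\begin{pmatrix}0&0&0&1&0\\0&0&1&0&0\\0&1&0&0&0\\1&0&0&0&0\\0&0&0&0&1\end{pmatrix}$, and $\mathsf{W}(m_1,\dots,m_{2d})=\prod_{i=1}^d\mathsf{A}^{m_{2i-1}}\mathsf{B}^{m_{2i}}$.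 $\operatorname{tr}^*(M)=M_{1,2}+M_{2,1}$ is the anti-trace. *)

theory Defs
  imports "Jordan_Normal_Form.Char_Poly"
begin

definition A1 :: "real mat" where "A1 = mat_of_rows_list 2 [[1,1],[0,1]]"
definition B1 :: "real mat" where "B1 = mat_of_rows_list 2 [[1,0],[1,1]]"

definition AA :: "real mat" where
  "AA = mat_of_rows_list 5 [[1,1,0,0,2],[0,1,0,0,0],[0,0,1,1,0],[0,0,0,1,0],[0,0,0,0,1]]"
definition BB :: "real mat" where
  "BB = mat_of_rows_list 5 [[1,0,0,0,0],[1,1,0,0,0],[0,0,1,0,0],[0,0,1,1,2],[0,0,0,0,1]]"
definition CC :: "real mat" where
  "CC = mat_of_rows_list 5 [[1,0,0,0,0],[0,1,0,0,0],[0,0,1,0,0],[0,0,0,1,0],[2,0,0,2,1]]"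
definition EE :: "real mat" where
  "EE = mat_of_rows_list 5 [[0,0,0,1,0],[0,0,1,0,0],[0,1,0,0,0],[1,0,0,0,0],[0,0,0,0,1]]"

fun word :: "nat \<Rightarrow> real mat \<Rightarrow> real mat \<Rightarrow> (nat \<Rightarrow> int) \<Rightarrow> nat \<Rightarrow> real mat" where
  "word n X Y m 0 = 1\<^sub>m n"
| "word n X Y m (Suc k) =
     word n X Y m k * (X ^\<^sub>m nat (m (2*k+1))) * (Y ^\<^sub>m nat (m (2*k+2)))"

definition W1 :: "(nat \<Rightarrow> int) \<Rightarrow> nat \<Rightarrow> real mat" where
  "W1 m d = word 2 A1 B1 m d"

definition WW :: "(nat \<Rightarrow> int) \<Rightarrow> nat \<Rightarrow> real mat" where
  "WW m d = word 5 AA BB m d"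

definition tr2 :: "real mat \<Rightarrow> real" where
  "tr2 M = M $$ (0,0) + M $$ (1,1)"

definition antitr :: "real mat \<Rightarrow> real" where
  "antitr M = M $$ (0,1) + M $$ (1,0)"

end

theory Submission
  imports Defs
begin

(* Write W1 = [[a, b], [c, e]]. The matrices AA and BB are the images of A1 and B1 under a
   multiplicative map rep5 from 2x2 to 5x5 matrices, so WW = rep5 W1 and C W E depends only on
   a, b, c, e. For the given exponents W1 has determinant 1, a, b, e >= 1 and c >= 0, hence
   s = b + c > 0 and t = a + e >= 2. The characteristic polynomial of C W E is
   (mu - 1)((mu^2 - 2 s mu + 1)^2 - r^2 mu^2) with r = sqrt (5 s^2 + 4 t s + 4), that is
   (mu - 1)(mu^2 - (2s + r) mu + 1)(mu^2 - (2s - r) mu + 1). Since r - 2s > 2, the two quadratics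
   have the real roots x, 1/x and -y, -1/y with x + 1/x = r + 2s and y + 1/y = r - 2s, and
   x > y > 1 > 1/y > 1/x separates the absolute values; x is the claimed eigenvalue. *)

lemma det_mat_of_rows_list_Nil: "det (mat_of_rows_list 0 []) = 1"
  by (simp add: mat_of_rows_list_def)

lemma det_mat_of_rows_list_Cons:
  fixes r :: "'a :: comm_ring_1 list"
  assumes "length r = Suc n" "length rs = n" "\<forall>row \<in> set rs. length row = Suc n"
  shows "det (mat_of_rows_list (Suc n) (r # rs)) =
    (\<Sum>j<Suc n. r ! j * (-1) ^ j *
       det (mat_of_rows_list n (map (\<lambda>row. take j row @ drop (Suc j) row) rs)))"
proof -
  let ?A = "mat_of_rows_list (Suc n) (r # rs)"
  have "?A \<in> carrier_mat (Suc n) (Suc n)"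
    using assms(2) by (simp add: mat_of_rows_list_def)
  then have "det ?A = (\<Sum>j<Suc n. ?A $$ (0, j) * cofactor ?A 0 j)"
    by (rule laplace_expansion_row) simp
  also have "\<dots> = (\<Sum>j<Suc n. r ! j * (-1) ^ j *
       det (mat_of_rows_list n (map (\<lambda>row. take j row @ drop (Suc j) row) rs)))"
  proof (intro sum.cong refl)
    fix j assume j: "j \<in> {..<Suc n}"
    have "mat_delete ?A 0 j = mat_of_rows_list n (map (\<lambda>row. take j row @ drop (Suc j) row) rs)"
      using assms j
      by (intro eq_matI) (auto simp: mat_delete_def mat_of_rows_list_def nth_append min_def)
    with j assms(2) show "?A $$ (0, j) * cofactor ?A 0 j = r ! j * (-1) ^ j *
        det (mat_of_rows_list n (map (\<lambda>row. take j row @ drop (Suc j) row) rs))"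
      by (simp add: cofactor_def mat_of_rows_list_def)
  qed
  finally show ?thesis .
qed

lemmas det_mat_of_rows_list_expand =
  det_mat_of_rows_list_Cons det_mat_of_rows_list_Nil list.size list.set ball_simps simp_thms
  take_Suc_Cons take_0 drop_Suc_Cons drop_0 append.simps list.map nth_Cons_0 nth_Cons_Suc
  sum.lessThan_Suc lessThan_0 sum.empty power_0 power_Suc add_0_left Suc_eq_plus1[symmetric]

definition mat2 :: "'a \<Rightarrow> 'a \<Rightarrow> 'a \<Rightarrow> 'a \<Rightarrow> 'a mat" where
  "mat2 a b c e = mat_of_rows_list 2 [[a, b], [c, e]]"

lemma dim_mat2 [simp]: "dim_row (mat2 a b c e) = 2" "dim_col (mat2 a b c e) = 2"
  unfolding mat2_def by (simp_all add: mat_of_rows_list_def)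

lemma mat2_mult:
  "mat2 a b c e * mat2 a' b' c' e' =
     mat2 (a*a' + b*c') (a*b' + b*e') (c*a' + e*c') (c*b' + e*(e' :: 'a :: comm_ring_1))"
  unfolding mat2_def
  by (rule eq_matI) (auto simp: mat_of_rows_list_def scalar_prod_def numeral_eq_Suc less_Suc_eq)

lemma one_mat2: "1\<^sub>m 2 = mat2 1 0 0 (1 :: 'a :: comm_ring_1)"
  unfolding mat2_def by (rule eq_matI) (auto simp: mat_of_rows_list_def numeral_eq_Suc less_Suc_eq)

definition rep5 :: "real \<Rightarrow> real \<Rightarrow> real \<Rightarrow> real \<Rightarrow> real mat" where
  "rep5 a b c e = mat_of_rows_list 5
     [[a, b, 0, 0, 2*b], [c, e, 0, 0, 2*e - 2], [0, 0, a, b, 2*a - 2], [0, 0, c, e, 2*c],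
      [0, 0, 0, 0, 1]]"

lemma dim_rep5 [simp]: "dim_row (rep5 a b c e) = 5" "dim_col (rep5 a b c e) = 5"
  unfolding rep5_def by (simp_all add: mat_of_rows_list_def)

lemma rep5_mult:
  "rep5 a b c e * rep5 a' b' c' e' = rep5 (a*a' + b*c') (a*b' + b*e') (c*a' + e*c') (c*b' + e*e')"
  unfolding rep5_def
  by (rule eq_matI)
    (auto simp: mat_of_rows_list_def scalar_prod_def numeral_eq_Suc less_Suc_eq algebra_simps)

lemma one_rep5: "1\<^sub>m 5 = rep5 1 0 0 1"
  unfolding rep5_def by (rule eq_matI) (auto simp: mat_of_rows_list_def numeral_eq_Suc less_Suc_eq)

lemma A1_eq: "A1 = mat2 1 1 0 1" and B1_eq: "B1 = mat2 1 0 1 1"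
  and AA_eq: "AA = rep5 1 1 0 1" and BB_eq: "BB = rep5 1 0 1 1"
  unfolding A1_def B1_def AA_def BB_def mat2_def rep5_def by simp_all

lemma A1_pow: "A1 ^\<^sub>m n = mat2 1 (real n) 0 1"
  by (induction n) (simp_all add: A1_eq one_mat2 mat2_mult)

lemma B1_pow: "B1 ^\<^sub>m n = mat2 1 0 (real n) 1"
  by (induction n) (simp_all add: B1_eq one_mat2 mat2_mult add.commute)

lemma AA_pow: "AA ^\<^sub>m n = rep5 1 (real n) 0 1"
  by (induction n) (simp_all add: AA_eq one_rep5 rep5_mult)

lemma BB_pow: "BB ^\<^sub>m n = rep5 1 0 (real n) 1"
  by (induction n) (simp_all add: BB_eq one_rep5 rep5_mult add.commute)

lemma W1_WW_Suc:
  assumes "W1 m k = mat2 a b c e" "WW m k = rep5 a b c e"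
  defines "p \<equiv> real (nat (m (2*k + 1)))" and "q \<equiv> real (nat (m (2*k + 2)))"
  shows "W1 m (Suc k) = mat2 (a + (a*p + b)*q) (a*p + b) (c + (c*p + e)*q) (c*p + e)"
    and "WW m (Suc k) = rep5 (a + (a*p + b)*q) (a*p + b) (c + (c*p + e)*q) (c*p + e)"
  using assms by (simp_all add: W1_def WW_def A1_pow B1_pow AA_pow BB_pow mat2_mult rep5_mult)

lemma W1_WW_entries:
  assumes "0 < m 1" and "1 \<le> k"
  shows "\<exists>a b c e. W1 m k = mat2 a b c e \<and> WW m k = rep5 a b c e \<and>
    a*e - b*c = 1 \<and> 1 \<le> a \<and> 1 \<le> b \<and> 0 \<le> c \<and> 1 \<le> e"
  using assms(2)
proof (induction k rule: nat_induct_at_least)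
  case base
  let ?p = "real (nat (m 1))" and ?q = "real (nat (m 2))"
  have "W1 m 0 = mat2 1 0 0 1" "WW m 0 = rep5 1 0 0 1"
    by (simp_all add: W1_def WW_def one_mat2 one_rep5)
  from W1_WW_Suc[OF this]
  have "W1 m 1 = mat2 (1 + ?p*?q) ?p ?q 1" "WW m 1 = rep5 (1 + ?p*?q) ?p ?q 1"
    by (simp_all add: numeral_2_eq_2)
  moreover have "1 \<le> ?p" using assms(1) by simp
  ultimately show ?case by (intro exI[of _ "1 + ?p*?q"] exI[of _ ?p] exI[of _ ?q] exI[of _ 1]) simp
next
  case (Suc k)
  then obtain a b c e where W: "W1 m k = mat2 a b c e" "WW m k = rep5 a b c e"
    and ent: "a*e - b*c = 1" "1 \<le> a" "1 \<le> b" "0 \<le> c" "1 \<le> e"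
    by blast
  define p where "p = real (nat (m (2*k + 1)))"
  define q where "q = real (nat (m (2*k + 2)))"
  have pq: "0 \<le> p" "0 \<le> q" unfolding p_def q_def by simp_all
  have "(a + (a*p + b)*q) * (c*p + e) - (a*p + b) * (c + (c*p + e)*q) = a*e - b*c"
    by (simp add: algebra_simps)
  moreover have "0 \<le> (a*p + b)*q" "0 \<le> (c*p + e)*q" "0 \<le> a*p" "0 \<le> c*p"
    using ent pq by simp_all
  ultimately show ?case
    using W1_WW_Suc[OF W] ent unfolding p_def[symmetric] q_def[symmetric]
    by (intro exI[of _ "a + (a*p + b)*q"] exI[of _ "a*p + b"] exI[of _ "c + (c*p + e)*q"]
        exI[of _ "c*p + e"]) simp
qed

lemma tr2_mat2: "tr2 (mat2 a b c e) = a + e"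
  and antitr_mat2: "antitr (mat2 a b c e) = b + c"
  unfolding tr2_def antitr_def mat2_def by (simp_all add: mat_of_rows_list_def)

definition cwe_mat :: "'a :: comm_ring_1 \<Rightarrow> 'a \<Rightarrow> 'a \<Rightarrow> 'a \<Rightarrow> 'a mat" where
  "cwe_mat a b c e = mat_of_rows_list 5
     [[0, 0, b, a, 2*b], [0, 0, e, c, 2*e - 2], [b, a, 0, 0, 2*a - 2], [e, c, 0, 0, 2*c],
      [2*e, 2*c, 2*b, 2*a, 4*(b + c) + 1]]"

lemma cwe_mat_carrier: "cwe_mat a b c e \<in> carrier_mat 5 5"
  unfolding cwe_mat_def mat_of_rows_list_def by (simp add: numeral_eq_Suc)

lemma map_mat_cwe_mat:
  "map_mat of_real (cwe_mat a b c e) =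
     cwe_mat (of_real a) (of_real b) (of_real c) (of_real e :: 'a :: {real_algebra_1, comm_ring_1})"
  unfolding cwe_mat_def by (rule eq_matI) (auto simp: mat_of_rows_list_def numeral_eq_Suc less_Suc_eq)

lemma CC_rep5_EE: "CC * rep5 a b c e * EE = cwe_mat a b c e"
  unfolding rep5_def cwe_mat_def CC_def EE_def
  by (rule eq_matI) (auto simp: mat_of_rows_list_def scalar_prod_def numeral_eq_Suc less_Suc_eq)

lemma char_matrix_cwe_mat:
  "char_matrix (cwe_mat a b c e) \<mu> = mat_of_rows_list 5
     [[-\<mu>, 0, b, a, 2*b], [0, -\<mu>, e, c, 2*e - 2], [b, a, -\<mu>, 0, 2*a - 2], [e, c, 0, -\<mu>, 2*c],
      [2*e, 2*c, 2*b, 2*a, 4*(b + c) + 1 - \<mu>]]"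
  unfolding char_matrix_def cwe_mat_def
  by (rule eq_matI) (auto simp: mat_of_rows_list_def numeral_eq_Suc less_Suc_eq)

lemma det_char_matrix_cwe_mat:
  fixes a b c e \<mu> :: "'a :: field"
  assumes "a * e - b * c = 1"
  shows "det (char_matrix (cwe_mat a b c e) \<mu>) =
    - (\<mu> - 1) * ((\<mu>^2 - 2*(b + c)*\<mu> + 1)^2 - (5*(b + c)^2 + 4*(a + e)*(b + c) + 4) * \<mu>^2)"
proof -
  have five: "5 = Suc (Suc (Suc (Suc (Suc 0))))"
    by simp
  have "det (char_matrix (cwe_mat a b c e) \<mu>) =
    - (\<mu> - 1) * ((\<mu>^2 - 2*(b + c)*\<mu> + 1)^2 - (5*(b + c)^2 + 4*(a + e)*(b + c) + 4) * \<mu>^2)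
    + (a*e - b*c - 1) * (\<mu> - 1) * (2*\<mu>^2 + 4*(b + c)*\<mu> - (a*e - b*c) - 1)"
    unfolding char_matrix_cwe_mat five
    by (simp only: det_mat_of_rows_list_expand) (simp add: algebra_simps power2_eq_square)
  with assms show ?thesis by simp
qed

lemma quadratic_reciprocal_roots:
  fixes x \<mu> :: "'a :: field"
  assumes "x \<noteq> 0"
  shows "\<mu>^2 - (x + inverse x) * \<mu> + 1 = (\<mu> - x) * (\<mu> - inverse x)"
  using assms by (simp add: field_simps power2_eq_square)

lemma quartic_reciprocal_roots:
  fixes x y \<sigma> \<rho> \<mu> :: "'a :: field"
  assumes "x \<noteq> 0" "y \<noteq> 0" "x + inverse x = 2*\<sigma> + \<rho>" "y + inverse y = 2*\<sigma> - \<rho>"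
  shows "(\<mu>^2 - 2*\<sigma>*\<mu> + 1)^2 - \<rho>^2 * \<mu>^2 =
    (\<mu> - x) * (\<mu> - inverse x) * ((\<mu> - y) * (\<mu> - inverse y))"
proof -
  have "(\<mu>^2 - 2*\<sigma>*\<mu> + 1)^2 - \<rho>^2 * \<mu>^2 =
      (\<mu>^2 - (2*\<sigma> + \<rho>) * \<mu> + 1) * (\<mu>^2 - (2*\<sigma> - \<rho>) * \<mu> + 1)"
    by (simp add: algebra_simps power2_eq_square)
  then show ?thesis
    using quadratic_reciprocal_roots[OF assms(1)] quadratic_reciprocal_roots[OF assms(2)]
    by (simp add: assms(3,4))
qed

definition larger_root :: "real \<Rightarrow> real" where
  "larger_root y = (y + sqrt (y^2 - 4)) / 2"

lemma larger_root_add_inverse: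
  assumes "2 \<le> y"
  shows "larger_root y + inverse (larger_root y) = y"
proof -
  let ?w = "sqrt (y^2 - 4)"
  have "2^2 \<le> y^2"
    using assms by (rule power_mono) simp
  then have "?w^2 = y^2 - 4"
    by simp
  then have "larger_root y * ((y - ?w) / 2) = 1"
    unfolding larger_root_def by (simp add: field_simps power2_eq_square)
  then have inv: "inverse (larger_root y) = (y - ?w) / 2"
    by (rule inverse_unique)
  show ?thesis
    unfolding inv by (simp add: larger_root_def field_simps)
qed

lemma larger_root_gt_one:
  assumes "2 < y"
  shows "1 < larger_root y"
proof -
  have "2^2 \<le> y^2"
    using assms by (intro power_mono) simp_all
  then have "0 \<le> sqrt (y^2 - 4)"
    by simp
  with assms have "2 < y + sqrt (y^2 - 4)"
    by linarith
  then show ?thesis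
    unfolding larger_root_def by simp
qed

lemma larger_root_strict_mono:
  assumes "2 \<le> y" and "y < z"
  shows "larger_root y < larger_root z"
proof -
  have "y^2 < z^2"
    using assms by (intro power_strict_mono) simp_all
  then have "sqrt (y^2 - 4) < sqrt (z^2 - 4)"
    by simp
  with assms have "y + sqrt (y^2 - 4) < z + sqrt (z^2 - 4)"
    by linarith
  then show ?thesis
    unfolding larger_root_def by (rule divide_strict_right_mono) simp
qed

lemma sqrt_discriminant_gap:
  fixes s t :: real
  assumes "0 < s" and "2 \<le> t"
  shows "2*s + 2 < sqrt (5*s^2 + 4*t*s + 4)"
proof (rule real_less_rsqrt)
  have "0 < s * (s + 4*t - 8)"
    using assms by simp
  then show "(2*s + 2)^2 < 5*s^2 + 4*t*s + 4"
    by (simp add: power2_eq_square algebra_simps)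
qed

lemma eigenvalues_cwe_mat:
  fixes a b c e :: real
  defines "s \<equiv> b + c" and "t \<equiv> a + e"
  defines "r \<equiv> sqrt (5*s^2 + 4*t*s + 4)"
  defines "x \<equiv> larger_root (r + 2*s)" and "y \<equiv> larger_root (r - 2*s)"
  assumes "a*e - b*c = 1" and "0 < s" and "2 \<le> t"
  shows "{\<mu>. eigenvalue (map_mat complex_of_real (cwe_mat a b c e)) \<mu>} =
    complex_of_real ` {x, inverse x, - y, - inverse y, 1}"
proof -
  have gap: "2 < r - 2*s"
    using sqrt_discriminant_gap[OF assms(7,8)] unfolding r_def by simp
  have r2: "r^2 = 5*s^2 + 4*t*s + 4"
    unfolding r_def using assms(7,8) by (simp add: add_nonneg_nonneg)
  have x: "x + inverse x = 2*s + r" and "y + inverse y = r - 2*s"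
    unfolding x_def y_def using gap \<open>0 < s\<close> by (simp_all add: larger_root_add_inverse)
  then have y: "- y + inverse (- y) = 2*s - r"
    by (simp add: inverse_minus_eq)
  have "0 < x" "0 < y"
    using gap larger_root_gt_one[of "r + 2*s"] larger_root_gt_one[of "r - 2*s"] \<open>0 < s\<close>
    unfolding x_def y_def by linarith+
  let ?X = "complex_of_real x" and ?Y = "complex_of_real (- y)"
  have XY: "?X \<noteq> 0" "?Y \<noteq> 0" "?X + inverse ?X = 2*of_real s + of_real r"
      "?Y + inverse ?Y = 2*of_real s - of_real r"
    using \<open>0 < x\<close> \<open>0 < y\<close>
      arg_cong[OF x, of complex_of_real] arg_cong[OF y, of complex_of_real]
    by (simp_all add: of_real_inverse[symmetric] del: of_real_inverse)
  have "eigenvalue (map_mat complex_of_real (cwe_mat a b c e)) \<mu> \<longleftrightarrow>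
      (\<mu> - 1) * ((\<mu> - ?X) * (\<mu> - inverse ?X) * ((\<mu> - ?Y) * (\<mu> - inverse ?Y))) = 0" for \<mu>
  proof -
    have det: "of_real a * of_real e - of_real b * of_real c = (1 :: complex)"
      using arg_cong[OF assms(6), of complex_of_real] by simp
    have st: "of_real b + of_real c = complex_of_real s" "of_real a + of_real e = complex_of_real t"
      unfolding s_def t_def by simp_all
    have r: "5 * (of_real s)^2 + 4 * of_real t * of_real s + 4 = (complex_of_real r)^2"
      using arg_cong[OF r2, of complex_of_real] by simp
    show ?thesis
      unfolding map_mat_cwe_mat eigenvalue_det[OF cwe_mat_carrier] det_char_matrix_cwe_mat[OF det] st r
        quartic_reciprocal_roots[OF XY]
      by simp
  qed
  then have "{\<mu>. eigenvalue (map_mat complex_of_real (cwe_mat a b c e)) \<mu>} =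
      {1, ?X, inverse ?X, ?Y, inverse ?Y}"
    by (simp only: mult_eq_0_iff right_minus_eq disj_assoc) blast
  then show ?thesis
    by (simp only: image_insert image_empty of_real_inverse of_real_minus of_real_1 inverse_minus_eq
        insert_commute)
qed

lemma reciprocal_spectrum_distinct:
  fixes x y :: real
  assumes "1 < y" and "y < x"
  defines "ls \<equiv> [x, inverse x, - y, - inverse y, 1]"
  shows "distinct ls" and "distinct (map abs ls)" and "\<forall>\<mu> \<in> set ls. \<bar>\<mu>\<bar> \<le> \<bar>x\<bar>"
proof -
  define u v where "u = inverse x" and "v = inverse y"
  have "0 < u" "u < v" "v < 1"
    using assms unfolding u_def v_def by (simp_all add: less_imp_inverse_less inverse_less_1_iff)
  with assms show "distinct ls" "distinct (map abs ls)" "\<forall>\<mu> \<in> set ls. \<bar>\<mu>\<bar> \<le> \<bar>x\<bar>"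
    unfolding ls_def u_def[symmetric] v_def[symmetric] by auto
qed

theorem mainTheorem14:
  fixes d :: nat and m :: "nat \<Rightarrow> int"
  assumes "d \<ge> 1"
    and "\<And>i. 1 \<le> i \<Longrightarrow> i < 2*d \<Longrightarrow> m i > 0"
    and "m (2*d) \<ge> 0"
  shows "let t = tr2 (W1 m d); s = antitr (W1 m d);
             M = CC * WW m d * EE;
             \<Lambda> = s + sqrt (5*s^2 + 4*t*s + 4)/2
                   + sqrt (9*s^2 + 4*t*s + 4*s*sqrt (5*s^2 + 4*t*s + 4))/2
         in \<exists>ls :: real list. length ls = 5 \<and> distinct ls \<and> distinct (map abs ls) \<and>
              {\<mu>. eigenvalue (map_mat complex_of_real M) \<mu>} = complex_of_real ` set ls \<and>
              \<Lambda> \<in> set ls \<and> (\<forall>\<mu>\<in>set ls. \<bar>\<mu>\<bar> \<le> \<bar>\<Lambda>\<bar>)"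
proof -
  obtain a b c e where W: "W1 m d = mat2 a b c e" "WW m d = rep5 a b c e"
    and ent: "a*e - b*c = 1" "1 \<le> a" "1 \<le> b" "0 \<le> c" "1 \<le> e"
    using W1_WW_entries[of m d] assms(1) assms(2)[of 1] by auto
  define s t where "s = b + c" and "t = a + e"
  define r where "r = sqrt (5*s^2 + 4*t*s + 4)"
  define x y where "x = larger_root (r + 2*s)" and "y = larger_root (r - 2*s)"
  have st: "0 < s" "2 \<le> t"
    using ent unfolding s_def t_def by linarith+
  then have gap: "2 < r - 2*s"
    using sqrt_discriminant_gap unfolding r_def by fastforce
  have "1 < y" "y < x"
    using gap st larger_root_gt_one larger_root_strict_mono unfolding x_def y_def by simp_all
  have "(r + 2*s)^2 - 4 = 9*s^2 + 4*t*s + 4*s*r"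
    using st unfolding r_def by (simp add: power2_eq_square algebra_simps add_nonneg_nonneg)
  then have "s + r/2 + sqrt (9*s^2 + 4*t*s + 4*s*r)/2 = x"
    unfolding x_def larger_root_def by (simp add: field_simps)
  then show ?thesis
    using eigenvalues_cwe_mat[OF ent(1), folded s_def t_def, OF st]
      reciprocal_spectrum_distinct[OF \<open>1 < y\<close> \<open>y < x\<close>]
    unfolding Let_def W tr2_mat2 antitr_mat2 CC_rep5_EE s_def[symmetric] t_def[symmetric]
      r_def[symmetric] x_def[symmetric] y_def[symmetric]
    by (intro exI[of _ "[x, inverse x, - y, - inverse y, 1]"]) auto
qed

end
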